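(* Let $J$ be the transformation $J:(u,v)(z)\mapsto(-\overline{u(\bar z)},\overline{v(\bar z)})$, which maps solutions of (L) to solutions of (L), and let $J_*f$ denote the image of a vector function $f$. Let $f_{j\pm}$, $j=1,2$, denote the $j$-th column of $W_\pm$. Then $J_*f_{2\pm}=f_{2\mp}$ in general, and $J_*f_{1\pm}=-f_{1\mp}$ whenever $l\in\mathbb Z$.
   Context: Let $\omega>0$, $l\ge0$ real, $\mu>0$. System (L): $u'=z^{-2}\big(-(lz+\mu(1+z^2))u+\frac{z}{2i\omega}v\big)$, $v'=\frac{1}{2i\omega z}u$. $F(z)=\operatorname{diag}(z^{-l}e^{\mu(1/z-z)},1)$. $S_+$ (resp. $S_-$) is a sector with vertex $0$ containing the closed upper (resp. lower) half-plane minus $0$ whose closure avoids $i\mathbb R_-$ (resp. $i\mathbb R_+$), $S_-=\overline{S_+}$. $H_\pm$ are the unique invertible matrix functions holomorphic on $S_\pm$, $C^\infty$ on $\overline{S_\pm}\setminus\{\infty\}$, $H_\pm(0)=\mathrm{Id}$, such that $w=H_\pm\tilde w$ transforms (L) into $\tilde u'=-z^{-2}(lz+\mu(1+z^2))\tilde u$, $\tilde v'=0$. The canonical sectorial fundamental matrices are $W_\pm=H_\pm F$, with the branch of $F$ on $S_-$ obtained by counterclockwise continuation from $S_+$. *)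

theory Defs
  imports "HOL-Analysis.Analysis"
begin

text \<open>Coefficient matrix of system (L): w' = A(z) w, w = (u,v).\<close>
definition sysA :: "real \<Rightarrow> real \<Rightarrow> real \<Rightarrow> complex \<Rightarrow> complex^2^2" where
  "sysA l mu omega z =
     vector [vector [- (of_real l * z + of_real mu * (1 + z^2)) / z^2,
                     1 / (2 * \<i> * of_real omega * z)],
             vector [1 / (2 * \<i> * of_real omega * z), 0]]"

text \<open>Coefficient matrix of the diagonal (formal normal form) system.\<close>
definition sysB :: "real \<Rightarrow> real \<Rightarrow> complex \<Rightarrow> complex^2^2" where
  "sysB l mu z =
     vector [vector [- (of_real l * z + of_real mu * (1 + z^2)) / z^2, 0],
             vector [0, 0]]"

text \<open>With 0<a,b<pi/2 these are
  exactly the open sectors containing the closed upper half-plane minus 0 whose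
  closure avoids the negative imaginary axis.\<close>
definition upper_sector :: "real \<Rightarrow> real \<Rightarrow> complex set" where
  "upper_sector a b = {z. z \<noteq> 0 \<and> (\<exists>t. - a < t \<and> t < pi + b \<and> z = of_real (cmod z) * cis t)}"

text \<open>C-infinity up to the boundary (on the closure, which contains 0) of a function
  holomorphic on S: every complex derivative extends continuously to closure S.\<close>
definition smooth_to_closure :: "complex set \<Rightarrow> (complex \<Rightarrow> complex) \<Rightarrow> bool" where
  "smooth_to_closure S h \<longleftrightarrow>
     (\<forall>n. \<forall>z0\<in>closure S. \<exists>L. ((deriv ^^ n) h \<longlongrightarrow> L) (at z0 within S))"

text \<open>H is a normalising gauge transformation on S: w = H w~ transforms (L) into the
  diagonal system, i.e. H' = A H - H B on S; H invertible and holomorphic on S,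
  smooth up to the boundary, H(0) = Id.\<close>
definition is_normalizing_H ::
  "real \<Rightarrow> real \<Rightarrow> real \<Rightarrow> complex set \<Rightarrow> (complex \<Rightarrow> complex^2^2) \<Rightarrow> bool" where
  "is_normalizing_H l mu omega S H \<longleftrightarrow>
     (\<forall>z\<in>S. invertible (H z)) \<and>
     (\<forall>i j. (\<lambda>z. H z $ i $ j) holomorphic_on S \<and> smooth_to_closure S (\<lambda>z. H z $ i $ j)) \<and>
     (H \<longlongrightarrow> mat 1) (at 0 within S) \<and>
     (\<forall>z\<in>S. \<forall>i j. ((\<lambda>x. H x $ i $ j) has_field_derivative
                        ((sysA l mu omega z ** H z - H z ** sysB l mu z) $ i $ j)) (at z))"

text \<open>Branches of log z: on S+ (directions in (-pi/2, 3pi/2]) and on S- obtained by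
  counterclockwise continuation from S+ (directions in (pi/2, 5pi/2]).\<close>
definition log_plus :: "complex \<Rightarrow> complex" where
  "log_plus z = Ln (- \<i> * z) + \<i> * of_real (pi / 2)"

definition log_minus :: "complex \<Rightarrow> complex" where
  "log_minus z = Ln (\<i> * z) + \<i> * of_real (3 * pi / 2)"

text \<open>(1,1) entry of F: z^(-l) e^(mu(1/z - z)), with the branch of log given by lg.\<close>
definition F11 :: "real \<Rightarrow> real \<Rightarrow> (complex \<Rightarrow> complex) \<Rightarrow> complex \<Rightarrow> complex" where
  "F11 l mu lg z = exp (- of_real l * lg z) * exp (of_real mu * (1 / z - z))"

text \<open>Columns of W = H F, as vector functions (u,v).\<close>
definition col1 :: "real \<Rightarrow> real \<Rightarrow> (complex \<Rightarrow> complex) \<Rightarrow> (complex \<Rightarrow> complex^2^2)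
                    \<Rightarrow> complex \<Rightarrow> complex \<times> complex" where
  "col1 l mu lg H z = (H z $ 1 $ 1 * F11 l mu lg z, H z $ 2 $ 1 * F11 l mu lg z)"

definition col2 :: "(complex \<Rightarrow> complex^2^2) \<Rightarrow> complex \<Rightarrow> complex \<times> complex" where
  "col2 H z = (H z $ 1 $ 2, H z $ 2 $ 2)"

definition Jstar :: "(complex \<Rightarrow> complex \<times> complex) \<Rightarrow> complex \<Rightarrow> complex \<times> complex" where
  "Jstar f z = (- cnj (fst (f (cnj z))), cnj (snd (f (cnj z))))"

end

theory Submission
  imports Defs "HOL-Complex_Analysis.Complex_Analysis" "HOL-Real_Asymp.Real_Asymp"
begin

text \<open>Write \<open>D = diag(1,-1)\<close> and \<open>K(z) = D conj(H\<^sub>-(conj z)) D\<close>. Since the coefficients of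
  (L) and of the normal form are real up to the sign of the off-diagonal ones, \<open>K\<close> satisfies on
  \<open>S\<^sub>+\<close> the same gauge equation \<open>H' = A H - H B\<close> as \<open>H\<^sub>+\<close>, with the same value \<open>Id\<close> at 0.
  The gauge equation has only one solution with this value: for two solutions \<open>H, K\<close> the
  entries of \<open>adj(H) K\<close> satisfy \<open>g' = 0\<close> on the diagonal and \<open>g' = \<plusminus>\<alpha> g\<close> off it, where
  \<open>\<alpha>(z) = -(l z + \<mu>(1 + z\<^sup>2))/z\<^sup>2\<close>. The former are constant, hence equal to their value
  at 0; for the latter \<open>g e\<^sup>\<mp>\<^sup>\<phi>\<close> is constant, \<open>\<phi>' = \<alpha>\<close>, and \<open>e\<^sup>\<mp>\<^sup>\<phi>\<close> decays along the
  positive resp. negative real axis because of the essential singularity \<open>e\<^sup>\<mu>\<^sup>/\<^sup>z\<close>, so they vanish.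
  Thus \<open>adj(H) K = Id\<close>, i.e. \<open>H\<^sub>+ = K\<close>, which is the statement about the second columns. For the
  first columns one needs in addition \<open>conj F(conj z) = F(z)\<close> for the continued branch of
  \<open>z\<^sup>-\<^sup>l\<close>, which holds when the monodromy \<open>e\<^sup>2\<^sup>\<pi>\<^sup>i\<^sup>l\<close> is trivial.\<close>

(* The power series notation \<open>$\<close> makes chains of vector indexing exponentially ambiguous. *)
no_notation fps_nth (infixl \<open>$\<close> 75)

lemma upper_sector_eq_exp_image:
  "upper_sector a b = exp ` {w. - a < Im w \<and> Im w < pi + b}"
proof
  show "upper_sector a b \<subseteq> exp ` {w. - a < Im w \<and> Im w < pi + b}"
  proof
    fix z assume "z \<in> upper_sector a b"
    then obtain t where z: "z \<noteq> 0" "- a < t" "t < pi + b" "z = of_real (cmod z) * cis t"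
      unfolding upper_sector_def by blast
    then have "exp (Complex (ln (cmod z)) t) = z"
      by (simp add: exp_eq_polar)
    with z show "z \<in> exp ` {w. - a < Im w \<and> Im w < pi + b}"
      by (intro rev_image_eqI[of "Complex (ln (cmod z)) t"]) auto
  qed
next
  show "exp ` {w. - a < Im w \<and> Im w < pi + b} \<subseteq> upper_sector a b"
  proof
    fix z assume "z \<in> exp ` {w. - a < Im w \<and> Im w < pi + b}"
    then obtain w where w: "- a < Im w" "Im w < pi + b" "z = exp w" by blast
    then have "cmod z = exp (Re w)"
      by (simp add: norm_exp_eq_Re)
    with w have "z = of_real (cmod z) * cis (Im w)"
      by (simp add: exp_eq_polar)
    moreover have "z \<noteq> 0"
      using w by simp
    ultimately show "z \<in> upper_sector a b"
      unfolding upper_sector_def using w by blast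
  qed
qed

lemma open_upper_sector: "open (upper_sector a b)"
proof -
  let ?U = "{w. - a < Im w \<and> Im w < pi + b}"
  have "open ?U"
    by (intro open_Collect_conj open_Collect_less continuous_intros)
  moreover have "exp (1::complex) = of_real (exp 1)"
    by (metis exp_of_real of_real_1)
  then have "exp (1::complex) \<noteq> exp 0"
    by simp
  then have "\<not> (exp :: complex \<Rightarrow> complex) constant_on UNIV"
    unfolding constant_on_def by (metis UNIV_I)
  ultimately have "open (exp ` ?U)"
    by (intro open_mapping_thm[where S = UNIV]) (auto intro: holomorphic_intros)
  then show ?thesis
    by (simp add: upper_sector_eq_exp_image)
qed

lemma connected_upper_sector: "connected (upper_sector a b)"
proof -
  have "{w. - a < Im w \<and> Im w < pi + b} = {w. Im w > - a} \<inter> {w. Im w < pi + b}"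
    by auto
  then have "connected {w. - a < Im w \<and> Im w < pi + b}"
    by (metis convex_Int convex_halfspace_Im_gt convex_halfspace_Im_lt convex_connected)
  then show ?thesis
    unfolding upper_sector_eq_exp_image by (intro connected_continuous_image continuous_intros)
qed

lemma upper_sector_nonzero: "z \<in> upper_sector a b \<Longrightarrow> z \<noteq> 0"
  unfolding upper_sector_def by auto

lemma of_real_in_upper_sector:
  assumes "0 < a" "0 < b" "t > 0"
  shows "complex_of_real t \<in> upper_sector a b"
proof -
  have "- a < 0" "0 < pi + b"
    using assms pi_gt_zero by linarith+
  with assms show ?thesis
    unfolding upper_sector_def by (auto intro!: exI[of _ 0])
qed

lemma minus_of_real_in_upper_sector:
  assumes "0 < a" "0 < b" "t > 0"
  shows "- complex_of_real t \<in> upper_sector a b"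
proof -
  have "- a < pi"
    using assms pi_gt_zero by linarith
  with assms show ?thesis
    unfolding upper_sector_def by (auto intro!: exI[of _ pi])
qed

lemma upper_sector_rotate_notin_nonpos_Reals:
  assumes "a < pi/2" "b < pi/2" "z \<in> upper_sector a b"
  shows "- \<i> * z \<notin> \<real>\<^sub>\<le>\<^sub>0"
proof
  assume "- \<i> * z \<in> \<real>\<^sub>\<le>\<^sub>0"
  then have "Re z = 0" "Im z \<le> 0"
    by (auto simp: complex_nonpos_Reals_iff)
  from assms obtain t where z: "z \<noteq> 0" "- a < t" "t < pi + b" "z = of_real (cmod z) * cis t"
    unfolding upper_sector_def by blast
  have "Re z = cmod z * cos t" "Im z = cmod z * sin t"
    using arg_cong[OF z(4), of Re] arg_cong[OF z(4), of Im] by simp_all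
  with \<open>Re z = 0\<close> \<open>Im z \<le> 0\<close> z(1) have cos: "cos t = 0" and sin: "sin t \<le> 0"
    by (auto simp: mult_le_0_iff)
  consider "t \<le> 0" | "0 < t" "t < pi" | "pi \<le> t"
    by linarith
  then show False
  proof cases
    case 1
    then have "cos t > 0" using z assms by (intro cos_gt_zero_pi) auto
    with cos show False by simp
  next
    case 2
    then have "sin t > 0" by (intro sin_gt_zero)
    with sin show False by simp
  next
    case 3
    then have "cos (t - pi) > 0" using z assms by (intro cos_gt_zero_pi) auto
    with cos show False by (simp add: cos_diff)
  qed
qed

lemma eventually_of_real_in_upper_sector:
  assumes "0 < a" "0 < b"
  shows "eventually (\<lambda>t. complex_of_real t \<in> upper_sector a b) (at_right 0)"
  using eventually_at_right_less[of "0::real"]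
  by eventually_elim (use of_real_in_upper_sector[OF assms] in auto)

lemma eventually_minus_of_real_in_upper_sector:
  assumes "0 < a" "0 < b"
  shows "eventually (\<lambda>t. - complex_of_real t \<in> upper_sector a b) (at_right 0)"
  using eventually_at_right_less[of "0::real"]
  by eventually_elim (use minus_of_real_in_upper_sector[OF assms] in auto)

lemma filterlim_of_real_upper_sector:
  assumes "0 < a" "0 < b"
  shows "filterlim complex_of_real (at 0 within upper_sector a b) (at_right 0)"
proof (rule filterlim_at_withinI)
  show "(complex_of_real \<longlongrightarrow> 0) (at_right 0)"
    using tendsto_of_real[OF tendsto_ident_at[of "0::real" "{0<..}"]] by simp
  show "\<forall>\<^sub>F t in at_right 0. complex_of_real t \<in> upper_sector a b - {0}"
    using eventually_of_real_in_upper_sector[OF assms] by eventually_elim (auto dest: upper_sector_nonzero)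
qed

lemma filterlim_minus_of_real_upper_sector:
  assumes "0 < a" "0 < b"
  shows "filterlim (\<lambda>t. - complex_of_real t) (at 0 within upper_sector a b) (at_right 0)"
proof (rule filterlim_at_withinI)
  show "((\<lambda>t. - complex_of_real t) \<longlongrightarrow> 0) (at_right 0)"
    using tendsto_minus[OF tendsto_of_real[OF tendsto_ident_at[of "0::real" "{0<..}"]]] by simp
  show "\<forall>\<^sub>F t in at_right 0. - complex_of_real t \<in> upper_sector a b - {0}"
    using eventually_minus_of_real_in_upper_sector[OF assms] by eventually_elim (auto dest: upper_sector_nonzero)
qed

lemma filterlim_cnj_at_0: "filterlim cnj (at 0 within cnj ` S) (at 0 within S)"
proof (rule filterlim_at_withinI)
  show "(cnj \<longlongrightarrow> 0) (at 0 within S)"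
    using tendsto_cnj[OF tendsto_ident_at[of 0 S]] by simp
  show "\<forall>\<^sub>F x in at 0 within S. cnj x \<in> cnj ` S - {0}"
    unfolding eventually_at_filter by (intro always_eventually) auto
qed

subsection \<open>Constancy on connected open sets\<close>

lemma has_field_derivative_0_eq_limit:
  fixes f :: "complex \<Rightarrow> complex" and \<gamma> :: "'a \<Rightarrow> complex"
  assumes "open S" "connected S"
    and "\<And>z. z \<in> S \<Longrightarrow> (f has_field_derivative 0) (at z)"
    and "F \<noteq> bot" "eventually (\<lambda>t. \<gamma> t \<in> S) F" "((\<lambda>t. f (\<gamma> t)) \<longlongrightarrow> L) F"
    and "z \<in> S"
  shows "f z = L"
proof -
  obtain c where c: "\<And>z. z \<in> S \<Longrightarrow> f z = c"
    using has_field_derivative_0_imp_constant_on[OF assms(3,2,1)] unfolding constant_on_def by blast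
  have "eventually (\<lambda>t. f (\<gamma> t) = c) F"
    using assms(5) by eventually_elim (rule c)
  then have "((\<lambda>t. f (\<gamma> t)) \<longlongrightarrow> c) F"
    by (rule tendsto_eventually)
  with assms(4,6) have "c = L"
    by (intro tendsto_unique)
  with c assms(7) show ?thesis by simp
qed

lemma linear_ode_solution_eq_0:
  fixes g \<phi> k :: "complex \<Rightarrow> complex" and \<gamma> :: "'a \<Rightarrow> complex"
  assumes "open S" "connected S"
    and \<phi>: "\<And>z. z \<in> S \<Longrightarrow> (\<phi> has_field_derivative k z) (at z)"
    and g: "\<And>z. z \<in> S \<Longrightarrow> (g has_field_derivative k z * g z) (at z)"
    and "F \<noteq> bot" "eventually (\<lambda>t. \<gamma> t \<in> S) F"
    and "((\<lambda>t. g (\<gamma> t)) \<longlongrightarrow> 0) F" "((\<lambda>t. exp (- \<phi> (\<gamma> t))) \<longlongrightarrow> 0) F"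
    and "z \<in> S"
  shows "g z = 0"
proof -
  have "((\<lambda>x. g x * exp (- \<phi> x)) has_field_derivative 0) (at z)" if "z \<in> S" for z
    using DERIV_mult[OF g[OF that] DERIV_chain2[OF DERIV_exp DERIV_minus[OF \<phi>[OF that]]]]
    by (rule DERIV_cong) (simp add: algebra_simps)
  from has_field_derivative_0_eq_limit[OF assms(1,2) this assms(5,6)]
    tendsto_mult[OF assms(7,8)] assms(9)
  have "g z * exp (- \<phi> z) = 0" by simp
  then show ?thesis by simp
qed

lemma has_field_derivative_0_eq_limit_at_0:
  fixes f :: "complex \<Rightarrow> complex"
  assumes "0 < a" "0 < b"
    and "\<And>z. z \<in> upper_sector a b \<Longrightarrow> (f has_field_derivative 0) (at z)"
    and "(f \<longlongrightarrow> L) (at 0 within upper_sector a b)"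
    and "z \<in> upper_sector a b"
  shows "f z = L"
  using open_upper_sector connected_upper_sector assms(3) trivial_limit_at_right_real
    eventually_of_real_in_upper_sector[OF assms(1,2)]
    filterlim_compose[OF assms(4) filterlim_of_real_upper_sector[OF assms(1,2)]] assms(5)
  by (rule has_field_derivative_0_eq_limit)

definition diag_coeff :: "real \<Rightarrow> real \<Rightarrow> complex \<Rightarrow> complex" where
  "diag_coeff l mu z = - (of_real l * z + of_real mu * (1 + z^2)) / z^2"

definition coupling :: "real \<Rightarrow> complex \<Rightarrow> complex" where
  "coupling omega z = 1 / (2 * \<i> * of_real omega * z)"

text \<open>A primitive of \<open>diag_coeff\<close> on \<open>S\<^sub>+\<close>; its exponential is the entry \<open>F11\<close>.\<close>

definition phase :: "real \<Rightarrow> real \<Rightarrow> complex \<Rightarrow> complex" where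
  "phase l mu z = - of_real l * log_plus z + of_real mu / z - of_real mu * z"

lemma cnj_diag_coeff_cnj: "cnj (diag_coeff l mu (cnj z)) = diag_coeff l mu z"
  by (simp add: diag_coeff_def)

lemma cnj_coupling_cnj: "cnj (coupling omega (cnj z)) = - coupling omega z"
  by (simp add: coupling_def)

lemma has_field_derivative_log_plus:
  assumes "a < pi/2" "b < pi/2" "z \<in> upper_sector a b"
  shows "(log_plus has_field_derivative 1 / z) (at z)"
proof -
  have "((\<lambda>x. Ln (- \<i> * x) + \<i> * of_real (pi/2)) has_field_derivative
          inverse (- \<i> * z) * (- \<i>)) (at z)"
    using upper_sector_rotate_notin_nonpos_Reals[OF assms]
    by (auto intro!: derivative_eq_intros)
  then show ?thesis
    using upper_sector_nonzero[OF assms(3)] unfolding log_plus_def[abs_def]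
    by (simp add: field_simps)
qed

lemma has_field_derivative_phase:
  assumes "a < pi/2" "b < pi/2" "z \<in> upper_sector a b"
  shows "(phase l mu has_field_derivative diag_coeff l mu z) (at z)"
  unfolding phase_def[abs_def] using upper_sector_nonzero[OF assms(3)]
  by (auto intro!: derivative_eq_intros has_field_derivative_log_plus[OF assms]
      simp: diag_coeff_def power2_eq_square field_simps)

lemma exp_minus_phase_tendsto_0:
  assumes "mu > 0"
  shows "((\<lambda>t. exp (- phase l mu (of_real t))) \<longlongrightarrow> 0) (at_right 0)"
proof (rule tendsto_norm_zero_cancel)
  have "eventually (\<lambda>t. exp (l * ln t - mu / t + mu * t) =
          norm (exp (- phase l mu (of_real t)))) (at_right (0::real))"
    using eventually_at_right_less[of "0::real"]
    by eventually_elim (simp add: phase_def norm_exp_eq_Re log_plus_def norm_mult)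
  moreover have "((\<lambda>t. exp (l * ln t - mu / t + mu * t)) \<longlongrightarrow> 0) (at_right 0)"
    using assms by real_asymp
  ultimately show "((\<lambda>t. norm (exp (- phase l mu (of_real t)))) \<longlongrightarrow> 0) (at_right 0)"
    by (rule tendsto_cong[THEN iffD1])
qed

lemma exp_phase_minus_tendsto_0:
  assumes "mu > 0"
  shows "((\<lambda>t. exp (phase l mu (- of_real t))) \<longlongrightarrow> 0) (at_right 0)"
proof (rule tendsto_norm_zero_cancel)
  have "eventually (\<lambda>t. exp (- l * ln t - mu / t + mu * t) =
          norm (exp (phase l mu (- of_real t)))) (at_right (0::real))"
    using eventually_at_right_less[of "0::real"]
    by eventually_elim (simp add: phase_def norm_exp_eq_Re log_plus_def norm_mult)
  moreover have "((\<lambda>t. exp (- l * ln t - mu / t + mu * t)) \<longlongrightarrow> 0) (at_right 0)"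
    using assms by real_asymp
  ultimately show "((\<lambda>t. norm (exp (phase l mu (- of_real t)))) \<longlongrightarrow> 0) (at_right 0)"
    by (rule tendsto_cong[THEN iffD1])
qed

subsection \<open>The gauge equation\<close>

definition gauge_solution ::
  "real \<Rightarrow> real \<Rightarrow> real \<Rightarrow> complex set \<Rightarrow> (complex \<Rightarrow> complex^2^2) \<Rightarrow> bool" where
  "gauge_solution l mu omega S H \<longleftrightarrow>
     (\<forall>z\<in>S. \<forall>i j. ((\<lambda>x. H x $ i $ j) has_field_derivative
                      ((sysA l mu omega z ** H z - H z ** sysB l mu z) $ i $ j)) (at z)) \<and>
     (H \<longlongrightarrow> mat 1) (at 0 within S)"

lemma is_normalizing_H_imp_gauge_solution:
  "is_normalizing_H l mu omega S H \<Longrightarrow> gauge_solution l mu omega S H"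
  unfolding is_normalizing_H_def gauge_solution_def by blast

lemma gauge_rhs_entries:
  fixes M :: "complex^2^2"
  shows "(sysA l mu omega z ** M - M ** sysB l mu z) $ 1 $ 1 = coupling omega z * M $ 2 $ 1"
    and "(sysA l mu omega z ** M - M ** sysB l mu z) $ 1 $ 2 =
           diag_coeff l mu z * M $ 1 $ 2 + coupling omega z * M $ 2 $ 2"
    and "(sysA l mu omega z ** M - M ** sysB l mu z) $ 2 $ 1 =
           coupling omega z * M $ 1 $ 1 - diag_coeff l mu z * M $ 2 $ 1"
    and "(sysA l mu omega z ** M - M ** sysB l mu z) $ 2 $ 2 = coupling omega z * M $ 1 $ 2"
  by (simp_all add: sysA_def sysB_def matrix_matrix_mult_def sum_2 diag_coeff_def coupling_def
      algebra_simps)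

lemma gauge_solution_has_field_derivative_entries:
  fixes H :: "complex \<Rightarrow> complex^2^2"
  assumes "gauge_solution l mu omega S H" "z \<in> S"
  shows "((\<lambda>x. H x $ 1 $ 1) has_field_derivative coupling omega z * H z $ 2 $ 1) (at z)"
    and "((\<lambda>x. H x $ 1 $ 2) has_field_derivative
           diag_coeff l mu z * H z $ 1 $ 2 + coupling omega z * H z $ 2 $ 2) (at z)"
    and "((\<lambda>x. H x $ 2 $ 1) has_field_derivative
           coupling omega z * H z $ 1 $ 1 - diag_coeff l mu z * H z $ 2 $ 1) (at z)"
    and "((\<lambda>x. H x $ 2 $ 2) has_field_derivative coupling omega z * H z $ 1 $ 2) (at z)"
proof -
  from assms have "((\<lambda>x. H x $ i $ j) has_field_derivative
      (sysA l mu omega z ** H z - H z ** sysB l mu z) $ i $ j) (at z)" for i j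
    unfolding gauge_solution_def by blast
  from this[of 1 1] this[of 1 2] this[of 2 1] this[of 2 2] show
    "((\<lambda>x. H x $ 1 $ 1) has_field_derivative coupling omega z * H z $ 2 $ 1) (at z)"
    "((\<lambda>x. H x $ 1 $ 2) has_field_derivative
       diag_coeff l mu z * H z $ 1 $ 2 + coupling omega z * H z $ 2 $ 2) (at z)"
    "((\<lambda>x. H x $ 2 $ 1) has_field_derivative
       coupling omega z * H z $ 1 $ 1 - diag_coeff l mu z * H z $ 2 $ 1) (at z)"
    "((\<lambda>x. H x $ 2 $ 2) has_field_derivative coupling omega z * H z $ 1 $ 2) (at z)"
    by (simp_all only: gauge_rhs_entries)
qed

lemma gauge_solution_tendsto_entries:
  fixes H :: "complex \<Rightarrow> complex^2^2"
  assumes "gauge_solution l mu omega S H"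
  shows "((\<lambda>x. H x $ 1 $ 1) \<longlongrightarrow> 1) (at 0 within S)"
    and "((\<lambda>x. H x $ 1 $ 2) \<longlongrightarrow> 0) (at 0 within S)"
    and "((\<lambda>x. H x $ 2 $ 1) \<longlongrightarrow> 0) (at 0 within S)"
    and "((\<lambda>x. H x $ 2 $ 2) \<longlongrightarrow> 1) (at 0 within S)"
proof -
  have "((\<lambda>x. H x $ i $ j) \<longlongrightarrow> mat 1 $ i $ j) (at 0 within S)" for i j
    using assms unfolding gauge_solution_def by (intro tendsto_vec_nth) auto
  from this[of 1 1] this[of 1 2] this[of 2 1] this[of 2 2] show
    "((\<lambda>x. H x $ 1 $ 1) \<longlongrightarrow> 1) (at 0 within S)"
    "((\<lambda>x. H x $ 1 $ 2) \<longlongrightarrow> 0) (at 0 within S)"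
    "((\<lambda>x. H x $ 2 $ 1) \<longlongrightarrow> 0) (at 0 within S)"
    "((\<lambda>x. H x $ 2 $ 2) \<longlongrightarrow> 1) (at 0 within S)"
    by (simp_all add: mat_def)
qed

text \<open>The pairings below are entries of \<open>adj(H) K\<close>; its remaining entry is
  \<open>gauge_pairing_diag\<close> with \<open>H\<close> and \<open>K\<close> exchanged.\<close>

lemma gauge_pairing_diag:
  fixes H K :: "complex \<Rightarrow> complex^2^2"
  assumes "0 < a" "0 < b"
    and H: "gauge_solution l mu omega (upper_sector a b) H"
    and K: "gauge_solution l mu omega (upper_sector a b) K"
    and "z \<in> upper_sector a b"
  shows "H z $ 2 $ 2 * K z $ 1 $ 1 - H z $ 1 $ 2 * K z $ 2 $ 1 = 1"
proof (rule has_field_derivative_0_eq_limit_at_0[OF assms(1,2) _ _ assms(5)])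
  note dH = gauge_solution_has_field_derivative_entries[OF H]
    and dK = gauge_solution_has_field_derivative_entries[OF K]
  show "((\<lambda>x. H x $ 2 $ 2 * K x $ 1 $ 1 - H x $ 1 $ 2 * K x $ 2 $ 1) has_field_derivative 0) (at y)"
    if "y \<in> upper_sector a b" for y
    using DERIV_diff[OF DERIV_mult[OF dH(4)[OF that] dK(1)[OF that]]
                        DERIV_mult[OF dH(2)[OF that] dK(3)[OF that]]]
    by (rule DERIV_cong) (simp add: algebra_simps)
  note lH = gauge_solution_tendsto_entries[OF H] and lK = gauge_solution_tendsto_entries[OF K]
  show "((\<lambda>x. H x $ 2 $ 2 * K x $ 1 $ 1 - H x $ 1 $ 2 * K x $ 2 $ 1) \<longlongrightarrow> 1)
          (at 0 within upper_sector a b)"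
    using tendsto_diff[OF tendsto_mult[OF lH(4) lK(1)] tendsto_mult[OF lH(2) lK(3)]] by simp
qed

lemma gauge_pairing_upper:
  fixes H K :: "complex \<Rightarrow> complex^2^2"
  assumes "0 < a" "a < pi/2" "0 < b" "b < pi/2" "mu > 0"
    and H: "gauge_solution l mu omega (upper_sector a b) H"
    and K: "gauge_solution l mu omega (upper_sector a b) K"
    and "z \<in> upper_sector a b"
  shows "H z $ 2 $ 2 * K z $ 1 $ 2 - H z $ 1 $ 2 * K z $ 2 $ 2 = 0"
proof (rule linear_ode_solution_eq_0[OF open_upper_sector connected_upper_sector
      has_field_derivative_phase[OF assms(2,4)] _ trivial_limit_at_right_real
      eventually_of_real_in_upper_sector[OF assms(1,3)] _ exp_minus_phase_tendsto_0[OF assms(5)]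
      assms(8)])
  note dH = gauge_solution_has_field_derivative_entries[OF H]
    and dK = gauge_solution_has_field_derivative_entries[OF K]
  show "((\<lambda>x. H x $ 2 $ 2 * K x $ 1 $ 2 - H x $ 1 $ 2 * K x $ 2 $ 2) has_field_derivative
          diag_coeff l mu y * (H y $ 2 $ 2 * K y $ 1 $ 2 - H y $ 1 $ 2 * K y $ 2 $ 2)) (at y)"
    if "y \<in> upper_sector a b" for y
    using DERIV_diff[OF DERIV_mult[OF dH(4)[OF that] dK(2)[OF that]]
                        DERIV_mult[OF dH(2)[OF that] dK(4)[OF that]]]
    by (rule DERIV_cong) (simp add: algebra_simps)
  note lH = gauge_solution_tendsto_entries[OF H] and lK = gauge_solution_tendsto_entries[OF K]
  show "((\<lambda>t. H (of_real t) $ 2 $ 2 * K (of_real t) $ 1 $ 2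
              - H (of_real t) $ 1 $ 2 * K (of_real t) $ 2 $ 2) \<longlongrightarrow> 0) (at_right 0)"
    using filterlim_compose[OF tendsto_diff[OF tendsto_mult[OF lH(4) lK(2)] tendsto_mult[OF lH(2) lK(4)]]
        filterlim_of_real_upper_sector[OF assms(1,3)]]
    by simp
qed

lemma gauge_pairing_lower:
  fixes H K :: "complex \<Rightarrow> complex^2^2"
  assumes "0 < a" "a < pi/2" "0 < b" "b < pi/2" "mu > 0"
    and H: "gauge_solution l mu omega (upper_sector a b) H"
    and K: "gauge_solution l mu omega (upper_sector a b) K"
    and "z \<in> upper_sector a b"
  shows "H z $ 1 $ 1 * K z $ 2 $ 1 - H z $ 2 $ 1 * K z $ 1 $ 1 = 0"
proof (rule linear_ode_solution_eq_0[where \<phi> = "\<lambda>x. - phase l mu x",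
      OF open_upper_sector connected_upper_sector
      DERIV_minus[OF has_field_derivative_phase[OF assms(2,4)]] _ trivial_limit_at_right_real
      eventually_minus_of_real_in_upper_sector[OF assms(1,3)] _ _ assms(8)])
  note dH = gauge_solution_has_field_derivative_entries[OF H]
    and dK = gauge_solution_has_field_derivative_entries[OF K]
  show "((\<lambda>x. H x $ 1 $ 1 * K x $ 2 $ 1 - H x $ 2 $ 1 * K x $ 1 $ 1) has_field_derivative
          - diag_coeff l mu y * (H y $ 1 $ 1 * K y $ 2 $ 1 - H y $ 2 $ 1 * K y $ 1 $ 1)) (at y)"
    if "y \<in> upper_sector a b" for y
    using DERIV_diff[OF DERIV_mult[OF dH(1)[OF that] dK(3)[OF that]]
                        DERIV_mult[OF dH(3)[OF that] dK(1)[OF that]]]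
    by (rule DERIV_cong) (simp add: algebra_simps)
  note lH = gauge_solution_tendsto_entries[OF H] and lK = gauge_solution_tendsto_entries[OF K]
  show "((\<lambda>t. H (- of_real t) $ 1 $ 1 * K (- of_real t) $ 2 $ 1
              - H (- of_real t) $ 2 $ 1 * K (- of_real t) $ 1 $ 1) \<longlongrightarrow> 0) (at_right 0)"
    using filterlim_compose[OF tendsto_diff[OF tendsto_mult[OF lH(1) lK(3)] tendsto_mult[OF lH(3) lK(1)]]
        filterlim_minus_of_real_upper_sector[OF assms(1,3)]]
    by simp
  show "((\<lambda>t. exp (- (- phase l mu (- of_real t)))) \<longlongrightarrow> 0) (at_right 0)"
    using exp_phase_minus_tendsto_0[OF assms(5)] by simp
qed

lemma gauge_solution_unique:
  fixes H K :: "complex \<Rightarrow> complex^2^2"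
  assumes "0 < a" "a < pi/2" "0 < b" "b < pi/2" "mu > 0"
    and H: "gauge_solution l mu omega (upper_sector a b) H"
    and K: "gauge_solution l mu omega (upper_sector a b) K"
    and z: "z \<in> upper_sector a b"
  shows "K z = H z"
proof -
  note sector = assms(1-5)
  have det: "H z $ 2 $ 2 * H z $ 1 $ 1 - H z $ 1 $ 2 * H z $ 2 $ 1 = 1"
    by (rule gauge_pairing_diag[OF sector(1,3) H H z])
  have "H z $ 2 $ 2 * K z $ 1 $ 1 - H z $ 1 $ 2 * K z $ 2 $ 1 = 1"
    and "K z $ 2 $ 2 * H z $ 1 $ 1 - K z $ 1 $ 2 * H z $ 2 $ 1 = 1"
    and "H z $ 2 $ 2 * K z $ 1 $ 2 - H z $ 1 $ 2 * K z $ 2 $ 2 = 0"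
    and "H z $ 1 $ 1 * K z $ 2 $ 1 - H z $ 2 $ 1 * K z $ 1 $ 1 = 0"
    by (rule gauge_pairing_diag[OF sector(1,3) H K z] gauge_pairing_diag[OF sector(1,3) K H z]
        gauge_pairing_upper[OF sector H K z] gauge_pairing_lower[OF sector H K z])+
  with det have "K z $ 1 $ 1 = H z $ 1 $ 1" "K z $ 1 $ 2 = H z $ 1 $ 2"
    "K z $ 2 $ 1 = H z $ 2 $ 1" "K z $ 2 $ 2 = H z $ 2 $ 2"
    by algebra+
  then show ?thesis
    by (simp add: vec_eq_iff forall_2)
qed

subsection \<open>The reflection\<close>

definition reflect :: "(complex \<Rightarrow> complex^2^2) \<Rightarrow> complex \<Rightarrow> complex^2^2" where
  "reflect H z = (\<chi> i j. (if i = j then 1 else -1) * cnj (H (cnj z) $ i $ j))"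

lemma gauge_rhs_reflect:
  fixes M :: "complex^2^2"
  shows "(sysA l mu omega z ** (\<chi> i j. (if i = j then 1 else -1) * cnj (M $ i $ j))
           - (\<chi> i j. (if i = j then 1 else -1) * cnj (M $ i $ j)) ** sysB l mu z) $ i $ j
         = (if i = j then 1 else -1) *
             cnj ((sysA l mu omega (cnj z) ** M - M ** sysB l mu (cnj z)) $ i $ j)"
  using exhaust_2[of i] exhaust_2[of j]
  by (elim disjE; simp only: gauge_rhs_entries)
     (simp_all add: cnj_diag_coeff_cnj cnj_coupling_cnj algebra_simps)

lemma gauge_solution_reflect:
  assumes "gauge_solution l mu omega (cnj ` S) H"
  shows "gauge_solution l mu omega S (reflect H)"
  unfolding gauge_solution_def
proof (intro conjI ballI allI)
  fix z i j assume "z \<in> S"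
  with assms have "((\<lambda>x. H x $ i $ j) has_field_derivative
      (sysA l mu omega (cnj z) ** H (cnj z) - H (cnj z) ** sysB l mu (cnj z)) $ i $ j) (at (cnj z))"
    unfolding gauge_solution_def by auto
  from DERIV_cmult[OF has_field_derivative_cnj_cnj[OF this], of "if i = j then 1 else -1"]
  show "((\<lambda>x. reflect H x $ i $ j) has_field_derivative
          (sysA l mu omega z ** reflect H z - reflect H z ** sysB l mu z) $ i $ j) (at z)"
    unfolding reflect_def gauge_rhs_reflect by (simp add: o_def)
next
  have "((\<lambda>x. H x $ i $ j) \<longlongrightarrow> mat 1 $ i $ j) (at 0 within cnj ` S)" for i j
    using assms unfolding gauge_solution_def by (intro tendsto_vec_nth) auto
  then have "((\<lambda>x. (if i = j then 1 else -1) * cnj (H (cnj x) $ i $ j)) \<longlongrightarrow>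
               (if i = j then 1 else -1) * cnj (mat 1 $ i $ j)) (at 0 within S)" for i j
    by (intro tendsto_mult_left tendsto_cnj) (rule filterlim_compose[OF _ filterlim_cnj_at_0])
  then have "(reflect H \<longlongrightarrow> (\<chi> i j. (if i = j then 1 else -1) * cnj (mat 1 $ i $ j)))
               (at 0 within S)"
    unfolding reflect_def[abs_def] by (intro tendsto_vec_lambda)
  moreover have "(\<chi> i j. (if i = j then 1 else -1) * cnj (mat 1 $ i $ j)) = (mat 1 :: complex^2^2)"
    by (simp add: vec_eq_iff mat_def)
  ultimately show "(reflect H \<longlongrightarrow> mat 1) (at 0 within S)"
    by simp
qed

lemma exp_log_plus: "z \<noteq> 0 \<Longrightarrow> exp (log_plus z) = z"
proof -
  assume z: "z \<noteq> 0"
  have "exp (\<i> * complex_of_real (pi / 2)) = \<i>"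
    by (metis cis_conv_exp cis_pi_half)
  moreover have "\<i> * z * \<i> = - z" by (metis complex_i_mult_minus mult.commute)
  ultimately show ?thesis using z unfolding log_plus_def by (simp add: exp_add)
qed

lemma exp_log_minus: "z \<noteq> 0 \<Longrightarrow> exp (log_minus z) = z"
proof -
  assume z: "z \<noteq> 0"
  have "cis (3 * pi / 2) = cis pi * cis (pi / 2)"
    unfolding cis_mult by (simp add: field_simps)
  also have "\<dots> = - \<i>" by (simp only: cis_pi cis_pi_half) simp
  finally have "exp (\<i> * complex_of_real (3 * pi / 2)) = - \<i>"
    by (metis cis_conv_exp)
  moreover have "\<i> * z * - \<i> = z" by (metis complex_i_mult_minus mult.commute minus_mult_right minus_minus)
  ultimately show ?thesis using z unfolding log_minus_def by (simp add: exp_add)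
qed

text \<open>The two branches differ by \<open>2\<pi>i\<close>-multiples only, which is invisible in \<open>z\<^sup>-\<^sup>l\<close> when
  \<open>l\<close> is an integer.\<close>

lemma cnj_F11_log_plus:
  assumes "z \<noteq> 0" and "l \<in> \<int>"
  shows "cnj (F11 l mu log_plus z) = F11 l mu log_minus (cnj z)"
proof -
  have "exp (cnj (log_plus z)) = exp (log_minus (cnj z))"
    using assms(1) by (simp add: exp_cnj[symmetric] exp_log_plus exp_log_minus)
  then obtain n :: int where n: "cnj (log_plus z) = log_minus (cnj z) + of_int (2 * n) * pi * \<i>"
    unfolding exp_eq by blast
  obtain k :: int where k: "l = of_int k"
    using assms(2) by (auto elim: Ints_cases)
  have "exp (- of_real l * cnj (log_plus z)) =
        exp (- of_real l * log_minus (cnj z)) * exp ((2 * of_int (- k * n) * pi) * \<i>)"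
    unfolding n k by (simp add: exp_add[symmetric] algebra_simps)
  also have "exp ((2 * of_int (- k * n) * pi) * \<i>) = 1"
    by (rule exp_integer_2pi) simp
  finally show ?thesis
    unfolding F11_def by (simp add: exp_cnj)
qed

lemma reflect_entries:
  "reflect H z $ 1 $ 1 = cnj (H (cnj z) $ 1 $ 1)" "reflect H z $ 1 $ 2 = - cnj (H (cnj z) $ 1 $ 2)"
  "reflect H z $ 2 $ 1 = - cnj (H (cnj z) $ 2 $ 1)" "reflect H z $ 2 $ 2 = cnj (H (cnj z) $ 2 $ 2)"
  by (simp_all add: reflect_def)

lemma Jstar_col2_reflect:
  assumes "\<forall>z\<in>S. H z = reflect K z"
  shows "\<forall>z\<in>cnj ` S. Jstar (col2 H) z = col2 K z"
    and "\<forall>z\<in>S. Jstar (col2 K) z = col2 H z"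
proof safe
  fix z assume "z \<in> S"
  with assms show "Jstar (col2 H) (cnj z) = col2 K (cnj z)" "Jstar (col2 K) z = col2 H z"
    by (simp_all add: Jstar_def col2_def reflect_entries)
qed

lemma Jstar_col1_reflect:
  assumes "\<forall>z\<in>S. H z = reflect K z"
    and "\<forall>z\<in>S. cnj (F11 l mu lg z) = F11 l mu lg' (cnj z)"
  shows "\<forall>z\<in>cnj ` S. Jstar (col1 l mu lg H) z = - col1 l mu lg' K z"
    and "\<forall>z\<in>S. Jstar (col1 l mu lg' K) z = - col1 l mu lg H z"
proof safe
  fix z assume "z \<in> S"
  with assms have H: "H z = reflect K z" and F: "cnj (F11 l mu lg z) = F11 l mu lg' (cnj z)"
    by auto
  then have F': "cnj (F11 l mu lg' (cnj z)) = F11 l mu lg z"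
    by (metis complex_cnj_cnj)
  show "Jstar (col1 l mu lg H) (cnj z) = - col1 l mu lg' K (cnj z)"
    by (simp add: Jstar_def col1_def H reflect_entries F)
  show "Jstar (col1 l mu lg' K) z = - col1 l mu lg H z"
    by (simp add: Jstar_def col1_def H reflect_entries F')
qed

theorem mainTheorem4:
  fixes omega l mu a b :: real
    and Hp Hm :: "complex \<Rightarrow> complex^2^2"
  assumes "omega > 0" and "l \<ge> 0" and "mu > 0"
    and "0 < a" and "a < pi / 2" and "0 < b" and "b < pi / 2"
    and "is_normalizing_H l mu omega (upper_sector a b) Hp"
    and "is_normalizing_H l mu omega (cnj ` upper_sector a b) Hm"
  shows "(\<forall>z\<in>cnj ` upper_sector a b. Jstar (col2 Hp) z = col2 Hm z)
       \<and> (\<forall>z\<in>upper_sector a b. Jstar (col2 Hm) z = col2 Hp z)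
       \<and> (l \<in> \<int> \<longrightarrow>
            (\<forall>z\<in>cnj ` upper_sector a b.
                Jstar (col1 l mu log_plus Hp) z = - col1 l mu log_minus Hm z)
          \<and> (\<forall>z\<in>upper_sector a b.
                Jstar (col1 l mu log_minus Hm) z = - col1 l mu log_plus Hp z))"
proof -
  have reflect: "\<forall>z\<in>upper_sector a b. Hp z = reflect Hm z"
    using gauge_solution_unique[OF assms(4,5,6,7,3)
        gauge_solution_reflect[OF is_normalizing_H_imp_gauge_solution[OF assms(9)]]
        is_normalizing_H_imp_gauge_solution[OF assms(8)]] by blast
  have "\<forall>z\<in>upper_sector a b. cnj (F11 l mu log_plus z) = F11 l mu log_minus (cnj z)"
    if "l \<in> \<int>"
    using cnj_F11_log_plus[OF upper_sector_nonzero that] by blast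
  with Jstar_col2_reflect[OF reflect] Jstar_col1_reflect[OF reflect] show ?thesis
    by simp
qed

end
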